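(* Let $f$ be a Herglotz function (analytic $\mathbb C_+\to\mathbb C_+$) which has a meromorphic continuation to $\mathbb C_+\cup(a,b)\cup\mathbb C_-$ satisfying $\overline{f(z)}=f(\bar z)$ and having finitely many poles in $(a,b)$. Then the limits $\lim_{\epsilon\downarrow0}f(b-\epsilon)$ and $\lim_{\epsilon\downarrow0}f(b+i\epsilon)$ exist in $\mathbb R\cup\{\infty\}$ and are equal. *)

theory Defs
  imports "HOL-Complex_Analysis.Complex_Analysis"
begin

definition herglotz :: "(complex \<Rightarrow> complex) \<Rightarrow> bool" where
  "herglotz f \<longleftrightarrow> f holomorphic_on {z. Im z > 0} \<and> (\<forall>z. Im z > 0 \<longrightarrow> Im (f z) > 0)"

end

(*
  Below b, on an interval (c, b) free of poles, reflection symmetry makes f real and the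
  Herglotz property makes it strictly increasing, so f(b - e) tends to a real L or to infinity.
  If the limit is L, then L - f omits (-infinity, 0], so sqrt (L - f) has positive real part and
  its Cayley transform phi maps the slit plane into the unit disc, with phi(b - e) tending to the
  boundary point -1.  Schwarz-Pick on a disc through b - e and b + i e of radius proportional
  to e bounds |phi(b + i e) + 1| by a fixed multiple of |phi(b - e) + 1|, so f(b + i e) tends
  to L as well.  The infinite case reduces to the finite one through -1/(f - m).
*)
theory Submission
  imports Defs
begin

section \<open>Bounded holomorphic functions on a slit plane\<close>

definition slit_plane :: "real \<Rightarrow> real \<Rightarrow> complex set" where
  "slit_plane c b = {z. Im z \<noteq> 0} \<union> complex_of_real ` {c<..<b}"

lemma mem_slit_plane_iff: "z \<in> slit_plane c b \<longleftrightarrow> Im z \<noteq> 0 \<or> c < Re z \<and> Re z < b"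
proof -
  have "z \<in> complex_of_real ` {c<..<b} \<longleftrightarrow> Im z = 0 \<and> c < Re z \<and> Re z < b"
  proof
    assume "Im z = 0 \<and> c < Re z \<and> Re z < b"
    moreover from this have "z = of_real (Re z)" by (simp add: complex_eq_iff)
    ultimately show "z \<in> complex_of_real ` {c<..<b}" by (metis greaterThanLessThan_iff image_eqI)
  qed auto
  then show ?thesis by (auto simp: slit_plane_def)
qed

lemma open_slit_plane: "open (slit_plane c b)"
proof -
  have "slit_plane c b = {z. Im z > 0} \<union> {z. Im z < 0} \<union> ({z. Re z > c} \<inter> {z. Re z < b})"
    by (auto simp: mem_slit_plane_iff)
  then show ?thesis
    by (simp add: open_Un open_Int open_halfspace_Re_gt open_halfspace_Re_lt
        open_halfspace_Im_gt open_halfspace_Im_lt)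
qed

lemma slit_plane_mono: "c \<le> c' \<Longrightarrow> slit_plane c' b \<subseteq> slit_plane c b"
  by (auto simp: mem_slit_plane_iff)

lemma slit_plane_avoiding_finite:
  assumes "a < b" and "finite P" and "P \<subseteq> complex_of_real ` {a<..<b}"
  obtains c where "c < b" and "slit_plane c b \<subseteq> slit_plane a b - P"
proof
  define c where "c = Max (insert a (Re ` P))"
  show "c < b"
    using assms by (auto simp: c_def)
  have "a \<le> c"
    using assms(2) by (simp add: c_def)
  show "slit_plane c b \<subseteq> slit_plane a b - P"
  proof
    fix z assume z: "z \<in> slit_plane c b"
    have "z \<notin> P"
    proof
      assume "z \<in> P"
      then have "Im z = 0" and "Re z \<le> c"
        using assms(2,3) by (auto simp: c_def)
      then show False using z by (simp add: mem_slit_plane_iff)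
    qed
    then show "z \<in> slit_plane a b - P"
      using z slit_plane_mono[OF \<open>a \<le> c\<close>] by auto
  qed
qed

lemma ball_subset_slit_plane:
  assumes "c \<le> Re z - s" and "Re z + s \<le> b" and "r\<^sup>2 \<le> s\<^sup>2 + (Im z)\<^sup>2" and "0 \<le> s"
  shows "ball z r \<subseteq> slit_plane c b"
proof
  fix w assume w: "w \<in> ball z r"
  show "w \<in> slit_plane c b"
  proof (cases "Im w = 0")
    case True
    have "(Re w - Re z)\<^sup>2 + (Im z)\<^sup>2 = (norm (w - z))\<^sup>2"
      using True by (simp add: cmod_power2 power2_commute)
    also have "\<dots> < r\<^sup>2"
      using w by (intro power_strict_mono) (auto simp: dist_norm norm_minus_commute)
    finally have "\<bar>Re w - Re z\<bar>\<^sup>2 < s\<^sup>2"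
      using assms(3) by simp
    then have "\<bar>Re w - Re z\<bar> < s"
      using assms(4) by (rule power2_less_imp_less)
    then show ?thesis using assms(1,2) by (auto simp: mem_slit_plane_iff)
  qed (simp add: mem_slit_plane_iff)
qed

lemma Schwarz_Pick_Moebius:
  assumes hol: "\<psi> holomorphic_on ball 0 1" and disc: "\<And>z. norm z < 1 \<Longrightarrow> norm (\<psi> z) < 1"
    and z1: "norm z1 < 1" and z2: "norm z2 < 1"
  shows "norm (Moebius_function 0 (\<psi> z1) (\<psi> z2)) \<le> norm (Moebius_function 0 z1 z2)"
proof -
  define g where "g = Moebius_function 0 (\<psi> z1) \<circ> \<psi> \<circ> Moebius_function 0 (-z1)"
  have into_disc: "Moebius_function 0 (-z1) ` ball 0 1 \<subseteq> ball 0 1" "\<psi> ` ball 0 1 \<subseteq> ball 0 1"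
    using Moebius_function_norm_lt_1 z1 disc by auto
  have "g holomorphic_on ball 0 1"
    unfolding g_def
    by (intro holomorphic_on_compose holomorphic_on_subset[OF hol] Moebius_function_holomorphic
        holomorphic_on_subset[OF Moebius_function_holomorphic[of "\<psi> z1"]] into_disc
        image_mono[OF into_disc(1), THEN order_trans])
      (use disc z1 in auto)
  moreover have "g 0 = 0"
    by (simp add: g_def Moebius_function_of_zero Moebius_function_eq_zero)
  moreover have "norm (g z) < 1" if "norm z < 1" for z
    unfolding g_def o_def using z1 that
    by (intro Moebius_function_norm_lt_1 disc) simp_all
  ultimately have "norm (g \<xi>) \<le> norm \<xi>" if "norm \<xi> < 1" for \<xi>
    using Schwarz_Lemma(1) that by blast
  from this[of "Moebius_function 0 z1 z2"]
  show ?thesis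
    using Moebius_function_compose[of "-z1" z1 z2] Moebius_function_norm_lt_1[OF z1 z2] z1 z2
    by (simp add: g_def)
qed

lemma norm_diff_le_of_Moebius_function_le:
  fixes w v \<zeta> :: complex
  assumes w: "norm w < 1" and v: "norm v < 1" and \<zeta>: "norm \<zeta> = 1"
    and k: "k < 1" and le: "norm (Moebius_function 0 w v) \<le> k"
  shows "norm (v - \<zeta>) \<le> (1 + k) / (1 - k) * norm (w - \<zeta>)"
proof -
  have "norm w * norm v < 1 * 1"
    using w v by (intro mult_strict_mono') auto
  then have "norm (cnj w * v) < 1" by (simp add: norm_mult)
  then have denom_pos: "0 < norm (1 - cnj w * v)" by auto
  have "cnj \<zeta> * \<zeta> = 1"
    using \<zeta> complex_norm_square[of \<zeta>] by (simp add: mult.commute)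
  then have "1 - cnj w * v = cnj \<zeta> * (\<zeta> - v) + v * cnj (\<zeta> - w)"
    by (simp add: algebra_simps)
  then have "norm (1 - cnj w * v) \<le> norm (cnj \<zeta> * (\<zeta> - v)) + norm (v * cnj (\<zeta> - w))"
    by (metis norm_triangle_ineq)
  also have "\<dots> = norm (v - \<zeta>) + norm v * norm (w - \<zeta>)"
    using \<zeta> by (simp add: norm_mult norm_minus_commute del: complex_cnj_diff)
  also have "norm v * norm (w - \<zeta>) \<le> norm (w - \<zeta>)"
    using v by (intro mult_left_le_one_le) auto
  finally have denom: "norm (1 - cnj w * v) \<le> norm (v - \<zeta>) + norm (w - \<zeta>)"
    by simp
  have "norm (v - w) / norm (1 - cnj w * v) \<le> k"
    using le by (simp add: Moebius_function_simple norm_divide)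
  then have num: "norm (v - w) \<le> k * norm (1 - cnj w * v)"
    using denom_pos by (simp add: pos_divide_le_eq)
  have "0 \<le> k" using le by (rule order_trans[OF norm_ge_zero])
  have "norm (v - \<zeta>) \<le> norm (v - w) + norm (w - \<zeta>)"
    using norm_triangle_ineq[of "v - w" "w - \<zeta>"] by simp
  also have "\<dots> \<le> k * (norm (v - \<zeta>) + norm (w - \<zeta>)) + norm (w - \<zeta>)"
    using num mult_left_mono[OF denom \<open>0 \<le> k\<close>] by linarith
  finally have "(1 - k) * norm (v - \<zeta>) \<le> (1 + k) * norm (w - \<zeta>)"
    by (simp add: algebra_simps)
  then show ?thesis
    using k by (simp add: pos_le_divide_eq mult.commute)
qed

text \<open>Schwarz-Pick on the disc of radius \<open>5e/4\<close> about \<open>b - e + i e\<close>: it passes through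
  \<open>b - e\<close> and \<open>b + i e\<close> (the images of \<open>-4i/5\<close> and \<open>4/5\<close>, independently of \<open>e\<close>) and meets the
  real axis only inside \<open>(b - 7e/4, b - e/4)\<close>.\<close>

lemma disc_valued_slit_plane_vertical_bound:
  assumes hol: "\<phi> holomorphic_on slit_plane c b"
    and disc: "\<And>z. z \<in> slit_plane c b \<Longrightarrow> norm (\<phi> z) < 1" and \<zeta>: "norm \<zeta> = 1"
  obtains C where "\<And>e. 0 < e \<Longrightarrow> 7/4 * e \<le> b - c \<Longrightarrow>
      norm (\<phi> (of_real b + \<i> * of_real e) - \<zeta>) \<le> C * norm (\<phi> (of_real (b - e)) - \<zeta>)"
proof -
  define z1 :: complex where "z1 = - (4/5) * \<i>"
  define z2 :: complex where "z2 = 4/5"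
  define k where "k = norm (Moebius_function 0 z1 z2)"
  have z1: "norm z1 < 1" and z2: "norm z2 < 1"
    by (simp_all add: z1_def z2_def norm_mult)
  have "k < 1"
    unfolding k_def using z1 z2 by (rule Moebius_function_norm_lt_1)
  have "norm (\<phi> (of_real b + \<i> * of_real e) - \<zeta>) \<le> (1 + k) / (1 - k) * norm (\<phi> (of_real (b - e)) - \<zeta>)"
    if e: "0 < e" "7/4 * e \<le> b - c" for e
  proof -
    define A where "A = (\<lambda>\<xi>. of_real (b - e) + \<i> * of_real e + of_real (5/4 * e) * \<xi>)"
    have "A ` ball 0 1 \<subseteq> ball (A 0) (5/4 * e)"
      using e by (auto simp: A_def dist_norm norm_mult)
    also have "\<dots> \<subseteq> slit_plane c b"
      using e by (intro ball_subset_slit_plane[where s = "3/4 * e"]) (auto simp: A_def power2_eq_square)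
    finally have A_into: "A ` ball 0 1 \<subseteq> slit_plane c b" .
    define \<psi> where "\<psi> = \<phi> \<circ> A"
    have "\<psi> holomorphic_on ball 0 1"
      unfolding \<psi>_def
      by (intro holomorphic_on_compose holomorphic_on_subset[OF hol A_into]) (auto simp: A_def intro!: holomorphic_intros)
    moreover have \<psi>_disc: "norm (\<psi> \<xi>) < 1" if "norm \<xi> < 1" for \<xi>
      using A_into that by (auto simp: \<psi>_def intro!: disc)
    ultimately have "norm (Moebius_function 0 (\<psi> z1) (\<psi> z2)) \<le> k"
      unfolding k_def using z1 z2 by (rule Schwarz_Pick_Moebius)
    moreover have "A z1 = of_real (b - e)" and "A z2 = of_real b + \<i> * of_real e"
      by (simp_all add: A_def z1_def z2_def complex_eq_iff)
    ultimately show ?thesis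
      using norm_diff_le_of_Moebius_function_le[OF \<psi>_disc[OF z1] \<psi>_disc[OF z2] \<zeta> \<open>k < 1\<close>]
      by (simp add: \<psi>_def)
  qed
  then show ?thesis using that by blast
qed

lemma disc_valued_slit_plane_tendsto_vertical:
  assumes "c < b" and hol: "\<phi> holomorphic_on slit_plane c b"
    and disc: "\<And>z. z \<in> slit_plane c b \<Longrightarrow> norm (\<phi> z) < 1" and \<zeta>: "norm \<zeta> = 1"
    and lim: "((\<lambda>e. \<phi> (of_real (b - e))) \<longlongrightarrow> \<zeta>) (at_right 0)"
  shows "((\<lambda>e. \<phi> (of_real b + \<i> * of_real e)) \<longlongrightarrow> \<zeta>) (at_right 0)"
proof -
  obtain C where C: "\<And>e. 0 < e \<Longrightarrow> 7/4 * e \<le> b - c \<Longrightarrow>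
      norm (\<phi> (of_real b + \<i> * of_real e) - \<zeta>) \<le> C * norm (\<phi> (of_real (b - e)) - \<zeta>)"
    using disc_valued_slit_plane_vertical_bound[OF hol disc \<zeta>] by blast
  have "eventually (\<lambda>e. norm (\<phi> (of_real b + \<i> * of_real e) - \<zeta>)
      \<le> C * norm (\<phi> (of_real (b - e)) - \<zeta>)) (at_right 0)"
    unfolding eventually_at_right_field using \<open>c < b\<close> C by (intro exI[of _ "4/7 * (b - c)"]) auto
  moreover have "((\<lambda>e. C * norm (\<phi> (of_real (b - e)) - \<zeta>)) \<longlongrightarrow> 0) (at_right 0)"
    using tendsto_mult_right_zero[OF tendsto_norm_zero[OF LIM_zero[OF lim]]] .
  ultimately have "((\<lambda>e. \<phi> (of_real b + \<i> * of_real e) - \<zeta>) \<longlongrightarrow> 0) (at_right 0)"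
    by (rule Lim_null_comparison)
  then show ?thesis by (rule LIM_zero_cancel)
qed

lemma Cayley_inverse:
  fixes w :: complex
  assumes "w + 1 \<noteq> 0"
  shows "(1 + (w - 1) / (w + 1)) / (1 - (w - 1) / (w + 1)) = w"
proof -
  have "1 + (w - 1) / (w + 1) = 2 * w / (w + 1)" and "1 - (w - 1) / (w + 1) = 2 / (w + 1)"
    using assms by (simp_all add: field_simps)
  then show ?thesis using assms by simp
qed

lemma norm_Cayley_less_1:
  fixes w :: complex
  assumes "0 < Re w"
  shows "norm ((w - 1) / (w + 1)) < 1"
proof -
  have "(norm (w - 1))\<^sup>2 = (Re w - 1)\<^sup>2 + (Im w)\<^sup>2" and "(norm (w + 1))\<^sup>2 = (Re w + 1)\<^sup>2 + (Im w)\<^sup>2"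
    by (simp_all add: cmod_power2)
  then have "(norm (w - 1))\<^sup>2 < (norm (w + 1))\<^sup>2"
    using assms by (simp add: power2_eq_square algebra_simps)
  then have "norm (w - 1) < norm (w + 1)"
    by (rule power2_less_imp_less) simp
  then show ?thesis by (simp add: norm_divide divide_less_eq)
qed

lemma Re_pos_slit_plane_tendsto_vertical:
  assumes "c < b" and hol: "K holomorphic_on slit_plane c b"
    and pos: "\<And>z. z \<in> slit_plane c b \<Longrightarrow> 0 < Re (K z)"
    and lim: "((\<lambda>e. K (of_real (b - e))) \<longlongrightarrow> 0) (at_right 0)"
  shows "((\<lambda>e. K (of_real b + \<i> * of_real e)) \<longlongrightarrow> 0) (at_right 0)"
proof -
  define \<phi> where "\<phi> z = (K z - 1) / (K z + 1)" for z
  have nz: "K z + 1 \<noteq> 0" if "z \<in> slit_plane c b" for z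
    using pos[OF that] by (auto simp: complex_eq_iff)
  have "\<phi> holomorphic_on slit_plane c b"
    unfolding \<phi>_def using hol nz by (intro holomorphic_intros) auto
  moreover have "norm (\<phi> z) < 1" if "z \<in> slit_plane c b" for z
    unfolding \<phi>_def using pos[OF that] by (rule norm_Cayley_less_1)
  moreover have "((\<lambda>e. \<phi> (of_real (b - e))) \<longlongrightarrow> (0 - 1) / (0 + 1)) (at_right 0)"
    unfolding \<phi>_def by (intro tendsto_intros lim) simp
  ultimately have "((\<lambda>e. \<phi> (of_real b + \<i> * of_real e)) \<longlongrightarrow> -1) (at_right 0)"
    using disc_valued_slit_plane_tendsto_vertical[OF \<open>c < b\<close>, of \<phi> "-1"] by simp
  then have "((\<lambda>e. (1 + \<phi> (of_real b + \<i> * of_real e)) / (1 - \<phi> (of_real b + \<i> * of_real e)))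
      \<longlongrightarrow> (1 + -1) / (1 - -1)) (at_right 0)"
    by (intro tendsto_intros) simp_all
  moreover have "eventually (\<lambda>e. (1 + \<phi> (of_real b + \<i> * of_real e)) / (1 - \<phi> (of_real b + \<i> * of_real e))
      = K (of_real b + \<i> * of_real e)) (at_right 0)"
    using eventually_at_right_less[of 0]
  proof eventually_elim
    case (elim e)
    then have "of_real b + \<i> * of_real e \<in> slit_plane c b"
      by (simp add: mem_slit_plane_iff)
    from nz[OF this] show ?case
      unfolding \<phi>_def by (rule Cayley_inverse)
  qed
  ultimately show ?thesis
    by (simp add: tendsto_cong)
qed

lemma Re_csqrt_pos:
  assumes "w \<notin> \<real>\<^sub>\<le>\<^sub>0"
  shows "0 < Re (csqrt w)"
proof (rule ccontr)
  assume "\<not> 0 < Re (csqrt w)"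
  then have "Re (csqrt w) = 0" using Re_csqrt[of w] by simp
  then have "csqrt w = \<i> * of_real (Im (csqrt w))"
    by (simp add: complex_eq_iff del: csqrt.simps)
  then have "w = of_real (- (Im (csqrt w))\<^sup>2)"
    by (metis power2_csqrt power2_i power_mult_distrib mult_minus1 of_real_minus of_real_power)
  then show False using assms by (metis nonpos_Reals_of_real_iff neg_le_0_iff_le zero_le_power2)
qed

section \<open>Herglotz functions continued across a real interval\<close>

definition herglotz_on_slit :: "real \<Rightarrow> real \<Rightarrow> (complex \<Rightarrow> complex) \<Rightarrow> bool" where
  "herglotz_on_slit c b F \<longleftrightarrow> F holomorphic_on slit_plane c b \<and>
     (\<forall>z. Im z > 0 \<longrightarrow> Im (F z) > 0) \<and> (\<forall>z. Im z < 0 \<longrightarrow> Im (F z) < 0) \<and>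
     (\<forall>x\<in>{c<..<b}. Im (F (of_real x)) = 0)"

lemma
  assumes "herglotz_on_slit c b F"
  shows herglotz_on_slit_holomorphic: "F holomorphic_on slit_plane c b"
    and herglotz_on_slit_Im_pos: "0 < Im z \<Longrightarrow> 0 < Im (F z)"
    and herglotz_on_slit_Im_neg: "Im z < 0 \<Longrightarrow> Im (F z) < 0"
    and herglotz_on_slit_real: "x \<in> {c<..<b} \<Longrightarrow> Im (F (of_real x)) = 0"
  using assms by (auto simp: herglotz_on_slit_def)

lemma herglotz_on_slit_Im_nonzero:
  "herglotz_on_slit c b F \<Longrightarrow> Im z \<noteq> 0 \<Longrightarrow> Im (F z) \<noteq> 0"
  by (metis herglotz_on_slit_Im_neg herglotz_on_slit_Im_pos less_irrefl linorder_neqE_linordered_idom)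

lemma herglotz_on_slit_of_reflection:
  assumes "herglotz f" and hol: "f holomorphic_on slit_plane c b"
    and sym: "\<And>z. z \<in> slit_plane c b \<Longrightarrow> cnj (f z) = f (cnj z)"
  shows "herglotz_on_slit c b f"
proof -
  have up: "Im (f z) > 0" if "Im z > 0" for z
    using \<open>herglotz f\<close> that by (simp add: herglotz_def)
  have "Im (f z) < 0" if "Im z < 0" for z
  proof -
    have "f z = cnj (f (cnj z))"
      using sym[of "cnj z"] that by (simp add: mem_slit_plane_iff)
    then show ?thesis using up[of "cnj z"] that by simp
  qed
  moreover have "Im (f (of_real x)) = 0" if "x \<in> {c<..<b}" for x
    using sym[of "of_real x"] that by (simp add: mem_slit_plane_iff complex_eq_iff)
  ultimately show ?thesis
    using hol up by (simp add: herglotz_on_slit_def)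
qed

lemma herglotz_on_slit_subinterval:
  assumes "herglotz_on_slit c b F" and "c \<le> c'"
  shows "herglotz_on_slit c' b F"
  using assms holomorphic_on_subset[OF _ slit_plane_mono[OF assms(2)]]
  by (auto simp: herglotz_on_slit_def)

lemma herglotz_on_slit_neg_inverse:
  assumes H: "herglotz_on_slit c b F"
    and m: "\<And>x. x \<in> {c<..<b} \<Longrightarrow> F (of_real x) \<noteq> of_real m"
  shows "herglotz_on_slit c b (\<lambda>z. - inverse (F z - of_real m))"
proof -
  have Im_neg_inverse: "Im (- inverse w) = Im w / ((Re w)\<^sup>2 + (Im w)\<^sup>2)" for w :: complex
    by simp
  have pos: "0 < (Re w)\<^sup>2 + (Im w)\<^sup>2" if "Im w \<noteq> 0" for w :: complex
    using that by (simp add: sum_power2_gt_zero_iff)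
  have nz: "F z - of_real m \<noteq> 0" if "z \<in> slit_plane c b" for z
  proof (cases "Im z = 0")
    case True
    then have "z = of_real (Re z)" "Re z \<in> {c<..<b}"
      using that by (auto simp: mem_slit_plane_iff complex_eq_iff)
    then show ?thesis using m by (metis right_minus_eq)
  next
    case False
    then show ?thesis using herglotz_on_slit_Im_nonzero[OF H] by (auto simp: complex_eq_iff)
  qed
  have "(\<lambda>z. - inverse (F z - of_real m)) holomorphic_on slit_plane c b"
    using H nz by (auto simp: herglotz_on_slit_def intro!: holomorphic_intros)
  moreover have "Im (- inverse (F z - of_real m)) > 0" if "Im z > 0" for z
    using H that pos[of "F z - of_real m"]
    by (simp only: Im_neg_inverse) (auto simp: herglotz_on_slit_def intro!: divide_pos_pos)
  moreover have "Im (- inverse (F z - of_real m)) < 0" if "Im z < 0" for z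
    using H that pos[of "F z - of_real m"]
    by (simp only: Im_neg_inverse) (auto simp: herglotz_on_slit_def intro!: divide_neg_pos)
  moreover have "Im (- inverse (F (of_real x) - of_real m)) = 0" if "x \<in> {c<..<b}" for x
    using H that by (simp add: herglotz_on_slit_def Im_neg_inverse)
  ultimately show ?thesis by (simp add: herglotz_on_slit_def)
qed

lemma herglotz_on_slit_Re_deriv_nonneg:
  assumes H: "herglotz_on_slit c b F" and x: "x \<in> {c<..<b}"
  obtains D where "((\<lambda>t. Re (F (of_real t))) has_real_derivative D) (at x)" and "0 \<le> D"
proof -
  have "of_real x \<in> slit_plane c b"
    using x by (simp add: mem_slit_plane_iff)
  then have FD: "(F has_field_derivative deriv F (of_real x)) (at (of_real x))"
    by (rule holomorphic_derivI[OF herglotz_on_slit_holomorphic[OF H] open_slit_plane])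
  define D where "D = deriv F (of_real x)"
  have "((\<lambda>t. Re (F (of_real t))) has_real_derivative Re D) (at x)"
    using has_field_derivative_Re[OF has_vector_derivative_real_field[OF FD]] by (simp add: D_def)
  moreover have "0 \<le> Re D"
    \<comment> \<open>\<open>Re D\<close> is also the slope at \<open>x\<close> of \<open>Im F\<close> on the vertical line, which rises from \<open>0\<close>\<close>
  proof (rule ccontr)
    assume neg: "\<not> 0 \<le> Re D"
    have lin: "((\<lambda>w. of_real x + \<i> * w) has_field_derivative \<i>) (at 0)"
      by (auto intro!: derivative_eq_intros)
    have FD0: "(F has_field_derivative D) (at (of_real x + \<i> * 0))"
      using FD by (simp add: D_def)
    have "((\<lambda>w. F (of_real x + \<i> * w)) has_field_derivative D * \<i>) (at (of_real 0))"
      using DERIV_chain2[OF FD0 lin] by simp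
    from has_field_derivative_Im[OF has_vector_derivative_real_field[OF this]]
    have "((\<lambda>t. Im (F (of_real x + \<i> * of_real t))) has_real_derivative Re D) (at 0)"
      by simp
    from DERIV_neg_dec_right[OF this] neg obtain d where "d > 0"
      and d: "\<And>h. 0 < h \<Longrightarrow> h < d \<Longrightarrow>
        Im (F (of_real x + \<i> * of_real (0 + h))) < Im (F (of_real x + \<i> * of_real 0))"
      by force
    have "Im (F (of_real x + \<i> * of_real 0)) = 0"
      using herglotz_on_slit_real[OF H x] by simp
    moreover have "Im (F (of_real x + \<i> * of_real (0 + d / 2))) > 0"
      using \<open>d > 0\<close> by (intro herglotz_on_slit_Im_pos[OF H]) simp
    ultimately show False
      using d[of "d / 2"] \<open>d > 0\<close> by simp
  qed
  ultimately show ?thesis using that by blast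
qed

lemma herglotz_on_slit_mono_Re:
  assumes "herglotz_on_slit c b F"
  shows "mono_on {c<..<b} (\<lambda>t. Re (F (of_real t)))"
proof (rule mono_onI)
  fix x1 x2 assume x12: "x1 \<in> {c<..<b}" "x2 \<in> {c<..<b}" "x1 \<le> x2"
  show "Re (F (of_real x1)) \<le> Re (F (of_real x2))"
  proof (rule DERIV_nonneg_imp_nondecreasing[OF \<open>x1 \<le> x2\<close>])
    fix t assume "x1 \<le> t" "t \<le> x2"
    then have "t \<in> {c<..<b}" using x12 by auto
    then obtain D where "((\<lambda>t. Re (F (of_real t))) has_real_derivative D) (at t)" "0 \<le> D"
      by (rule herglotz_on_slit_Re_deriv_nonneg[OF assms])
    then show "\<exists>D. ((\<lambda>t. Re (F (of_real t))) has_real_derivative D) (at t) \<and> 0 \<le> D"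
      by blast
  qed
qed

lemma herglotz_on_slit_strict_mono_Re:
  assumes H: "herglotz_on_slit c b F"
  shows "strict_mono_on {c<..<b} (\<lambda>t. Re (F (of_real t)))"
proof (rule strict_mono_onI)
  fix x1 x2 assume x1: "x1 \<in> {c<..<b}" and x2: "x2 \<in> {c<..<b}" and "x1 < x2"
  define g where "g t = Re (F (of_real t))" for t
  have "g x1 < g x2"
  proof (rule ccontr)
    \<comment> \<open>otherwise \<open>F\<close> is real and constant on \<open>[x1, x2]\<close>, hence, by the identity theorem, also on
      the disc with that diameter, where it must have positive imaginary part\<close>
    assume "\<not> g x1 < g x2"
    have const: "F (of_real t) - of_real (g x1) = 0" if t: "t \<in> {x1<..<x2}" for t
    proof -
      have "t \<in> {c<..<b}" using t x1 x2 by auto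
      then have "g x1 \<le> g t" "g t \<le> g x2" and "Im (F (of_real t)) = 0"
        using t x1 x2 mono_onD[OF herglotz_on_slit_mono_Re[OF H]] H
        by (auto simp: g_def herglotz_on_slit_def)
      then show ?thesis
        using \<open>\<not> g x1 < g x2\<close> by (simp add: g_def complex_eq_iff)
    qed
    define xm where "xm = (x1 + x2) / 2"
    define \<rho> where "\<rho> = (x2 - x1) / 2"
    have "\<rho> > 0" using \<open>x1 < x2\<close> by (simp add: \<rho>_def)
    have ends: "xm - \<rho> = x1" "xm + \<rho> = x2"
      by (simp_all add: xm_def \<rho>_def field_simps)
    then have S: "ball (of_real xm) \<rho> \<subseteq> slit_plane c b"
      using x1 x2 \<open>\<rho> > 0\<close> by (intro ball_subset_slit_plane[where s = \<rho>]) auto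
    have "F (of_real xm + \<i> * of_real (\<rho> / 2)) - of_real (g x1) = 0"
    proof (rule analytic_continuation[where f = "\<lambda>z. F z - of_real (g x1)" and S = "ball (of_real xm) \<rho>"
          and U = "of_real ` {x1<..<x2}" and \<xi> = "of_real xm"])
      show "(\<lambda>z. F z - of_real (g x1)) holomorphic_on ball (of_real xm) \<rho>"
        using H holomorphic_on_subset[OF _ S] by (auto simp: herglotz_on_slit_def intro!: holomorphic_intros)
      show "complex_of_real ` {x1<..<x2} \<subseteq> ball (of_real xm) \<rho>"
        using ends by (auto simp: dist_of_real dist_real_def)
      have "xm islimpt {x1<..<x2}"
        using \<open>x1 < x2\<close> by (intro open_imp_islimpt) (auto simp: xm_def)
      then show "of_real xm islimpt complex_of_real ` {x1<..<x2}"
        by (rule islimpt_isCont_image) (auto simp: eventually_at_filter)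
      show "of_real xm + \<i> * of_real (\<rho> / 2) \<in> ball (of_real xm) \<rho>"
        using \<open>\<rho> > 0\<close> by (simp add: dist_norm norm_mult)
    qed (use const \<open>\<rho> > 0\<close> in auto)
    moreover have "Im (F (of_real xm + \<i> * of_real (\<rho> / 2))) > 0"
      using H \<open>\<rho> > 0\<close> by (simp add: herglotz_on_slit_def)
    ultimately show False by (simp add: complex_eq_iff)
  qed
  then show "Re (F (of_real x1)) < Re (F (of_real x2))" by (simp add: g_def)
qed

section \<open>Boundary limits at the endpoint\<close>

lemma eventually_at_right_0_diff_in_Ioo:
  "x < b \<Longrightarrow> eventually (\<lambda>e. b - e \<in> {x<..<b}) (at_right (0::real))"
  unfolding eventually_at_right_field by (intro exI[of _ "b - x"]) auto

lemma herglotz_on_slit_Re_less_limit: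
  assumes H: "herglotz_on_slit c b F" and x: "x \<in> {c<..<b}"
    and lim: "((\<lambda>e. F (of_real (b - e))) \<longlongrightarrow> of_real L) (at_right 0)"
  shows "Re (F (of_real x)) < L"
proof -
  define y where "y = (x + b) / 2"
  have y: "y \<in> {x<..<b}" using x by (simp add: y_def)
  have "Re (F (of_real x)) < Re (F (of_real y))"
    using x y by (intro strict_mono_onD[OF herglotz_on_slit_strict_mono_Re[OF H]]) auto
  also have "Re (F (of_real y)) \<le> L"
  proof (rule tendsto_lowerbound)
    show "((\<lambda>e. Re (F (of_real (b - e)))) \<longlongrightarrow> L) (at_right 0)"
      using tendsto_Re[OF lim] by simp
    have "eventually (\<lambda>e. b - e \<in> {y<..<b}) (at_right 0)"
      using eventually_at_right_0_diff_in_Ioo[of y b] y by simp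
    then show "eventually (\<lambda>e. Re (F (of_real y)) \<le> Re (F (of_real (b - e)))) (at_right 0)"
    proof eventually_elim
      case (elim e)
      then show ?case
        using x y by (intro mono_onD[OF herglotz_on_slit_mono_Re[OF H]]) auto
    qed
  qed simp
  finally show ?thesis .
qed

lemma herglotz_on_slit_tendsto_vertical:
  assumes H: "herglotz_on_slit c b F" and "c < b"
    and lim: "((\<lambda>e. F (of_real (b - e))) \<longlongrightarrow> of_real L) (at_right 0)"
  shows "((\<lambda>e. F (of_real b + \<i> * of_real e)) \<longlongrightarrow> of_real L) (at_right 0)"
proof -
  define K where "K z = csqrt (of_real L - F z)" for z
  have not_nonpos: "of_real L - F z \<notin> \<real>\<^sub>\<le>\<^sub>0" if z: "z \<in> slit_plane c b" for z
  proof (cases "Im z = 0")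
    case True
    then have "z = of_real (Re z)" and "Re z \<in> {c<..<b}"
      using z by (auto simp: mem_slit_plane_iff complex_eq_iff)
    then have "Im (F z) = 0" and "Re (F z) < L"
      using herglotz_on_slit_real[OF H] herglotz_on_slit_Re_less_limit[OF H _ lim] by metis+
    then show ?thesis by (simp add: complex_nonpos_Reals_iff)
  next
    case False
    then show ?thesis
      using herglotz_on_slit_Im_nonzero[OF H] by (simp add: complex_nonpos_Reals_iff)
  qed
  have "K holomorphic_on slit_plane c b"
    unfolding K_def using herglotz_on_slit_holomorphic[OF H] not_nonpos by (intro holomorphic_intros)
  moreover have "0 < Re (K z)" if "z \<in> slit_plane c b" for z
    unfolding K_def using not_nonpos[OF that] by (rule Re_csqrt_pos)
  moreover have "((\<lambda>e. K (of_real (b - e))) \<longlongrightarrow> 0) (at_right 0)"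
  proof -
    have "((\<lambda>e. sqrt (norm (of_real L - F (of_real (b - e)))))
        \<longlongrightarrow> sqrt (norm (of_real L - of_real L :: complex))) (at_right 0)"
      by (intro tendsto_intros lim)
    then have "((\<lambda>e. norm (K (of_real (b - e)))) \<longlongrightarrow> 0) (at_right 0)"
      by (simp add: K_def)
    then show ?thesis
      by (simp only: tendsto_norm_zero_iff)
  qed
  ultimately have "((\<lambda>e. K (of_real b + \<i> * of_real e)) \<longlongrightarrow> 0) (at_right 0)"
    by (rule Re_pos_slit_plane_tendsto_vertical[OF \<open>c < b\<close>])
  then have "((\<lambda>e. of_real L - (K (of_real b + \<i> * of_real e))\<^sup>2) \<longlongrightarrow> of_real L - 0\<^sup>2) (at_right 0)"
    by (intro tendsto_intros)
  then show ?thesis by (simp add: K_def)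
qed

lemma herglotz_on_slit_tendsto_vertical_infinity:
  assumes H: "herglotz_on_slit c b F" and "c < b"
    and lim: "filterlim (\<lambda>e. F (of_real (b - e))) at_infinity (at_right 0)"
  shows "filterlim (\<lambda>e. F (of_real b + \<i> * of_real e)) at_infinity (at_right 0)"
proof -
  define x0 where "x0 = (c + b) / 2"
  define m where "m = Re (F (of_real x0))"
  have x0: "c < x0" "x0 < b" using \<open>c < b\<close> by (simp_all add: x0_def)
  have "F (of_real x) \<noteq> of_real m" if "x \<in> {x0<..<b}" for x
  proof -
    have "m < Re (F (of_real x))"
      using that x0 unfolding m_def by (intro strict_mono_onD[OF herglotz_on_slit_strict_mono_Re[OF H]]) auto
    then show ?thesis by auto
  qed
  with herglotz_on_slit_subinterval[OF H] x0
  have H': "herglotz_on_slit x0 b (\<lambda>z. - inverse (F z - of_real m))"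
    by (intro herglotz_on_slit_neg_inverse) auto
  have "filterlim (\<lambda>e. F (of_real (b - e)) + - of_real m) at_infinity (at_right 0)"
    by (rule tendsto_add_filterlim_at_infinity'[OF lim tendsto_const])
  then have "((\<lambda>e. inverse (F (of_real (b - e)) - of_real m)) \<longlongrightarrow> 0) (at_right 0)"
    using filterlim_compose[OF tendsto_inverse_0] by simp
  then have "((\<lambda>e. - inverse (F (of_real (b - e)) - of_real m)) \<longlongrightarrow> of_real 0) (at_right 0)"
    using tendsto_minus by fastforce
  from herglotz_on_slit_tendsto_vertical[OF H' x0(2) this]
  have "((\<lambda>e. inverse (F (of_real b + \<i> * of_real e) - of_real m)) \<longlongrightarrow> 0) (at_right 0)"
    using tendsto_minus by fastforce
  moreover have "eventually (\<lambda>e. inverse (F (of_real b + \<i> * of_real e) - of_real m) \<noteq> 0) (at_right 0)"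
    using eventually_at_right_less[of 0]
  proof eventually_elim
    case (elim e)
    have "0 < Im (F (of_real b + \<i> * of_real e))"
      by (rule herglotz_on_slit_Im_pos[OF H]) (simp add: elim)
    then show ?case by (auto simp: complex_eq_iff)
  qed
  ultimately have "filterlim (\<lambda>e. inverse (F (of_real b + \<i> * of_real e) - of_real m)) (at 0) (at_right 0)"
    by (rule filterlim_atI)
  then have "filterlim (\<lambda>e. F (of_real b + \<i> * of_real e) - of_real m) at_infinity (at_right 0)"
    by (simp add: filterlim_inverse_at_iff)
  from tendsto_add_filterlim_at_infinity'[OF this tendsto_const[of "of_real m"]]
  show ?thesis by simp
qed

lemma mono_on_tendsto_left_or_at_top:
  fixes g :: "real \<Rightarrow> real"
  assumes "c < b" and mono: "mono_on {c<..<b} g"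
  shows "(\<exists>L. ((\<lambda>e. g (b - e)) \<longlongrightarrow> L) (at_right 0)) \<or> filterlim (\<lambda>e. g (b - e)) at_top (at_right 0)"
proof (cases "bdd_above (g ` {c<..<b})")
  case True
  define L where "L = Sup (g ` {c<..<b})"
  have "((\<lambda>e. g (b - e)) \<longlongrightarrow> L) (at_right 0)"
  proof (rule order_tendstoI)
    fix y assume "y < L"
    then obtain x where x: "x \<in> {c<..<b}" "y < g x"
      using less_cSup_iff[of "g ` {c<..<b}"] True \<open>c < b\<close> by (auto simp: L_def)
    show "eventually (\<lambda>e. y < g (b - e)) (at_right 0)"
      using eventually_at_right_0_diff_in_Ioo[of x b] x
      by (auto elim!: eventually_mono intro: less_le_trans[OF _ mono_onD[OF mono]])
  next
    fix y assume "L < y"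
    show "eventually (\<lambda>e. g (b - e) < y) (at_right 0)"
      using eventually_at_right_0_diff_in_Ioo[OF \<open>c < b\<close>]
    proof eventually_elim
      case (elim e)
      then have "g (b - e) \<le> L"
        unfolding L_def using True by (intro cSup_upper) auto
      then show ?case using \<open>L < y\<close> by simp
    qed
  qed
  then show ?thesis by blast
next
  case False
  have "filterlim (\<lambda>e. g (b - e)) at_top (at_right 0)"
    unfolding filterlim_at_top
  proof
    fix Z
    have "\<exists>x\<in>{c<..<b}. Z < g x"
      using False unfolding bdd_above_def by (auto simp: not_le)
    then obtain x where x: "x \<in> {c<..<b}" "Z < g x" by blast
    from x have "x < b" by simp
    from eventually_at_right_0_diff_in_Ioo[OF this]
    show "eventually (\<lambda>e. Z \<le> g (b - e)) (at_right 0)"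
    proof eventually_elim
      case (elim e)
      then have "g x \<le> g (b - e)"
        using x by (intro mono_onD[OF mono]) auto
      then show ?case using x by simp
    qed
  qed
  then show ?thesis by blast
qed

lemma herglotz_on_slit_tendsto_left_or_infinity:
  assumes H: "herglotz_on_slit c b F" and "c < b"
  shows "(\<exists>L. ((\<lambda>e. F (of_real (b - e))) \<longlongrightarrow> of_real L) (at_right 0))
    \<or> filterlim (\<lambda>e. F (of_real (b - e))) at_infinity (at_right 0)"
proof -
  define g where "g = (\<lambda>t. Re (F (of_real t)))"
  have F_eq: "eventually (\<lambda>e. F (of_real (b - e)) = of_real (g (b - e))) (at_right 0)"
    using eventually_at_right_0_diff_in_Ioo[OF \<open>c < b\<close>]
  proof eventually_elim
    case (elim e)
    then have "Im (F (of_real (b - e))) = 0"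
      by (rule herglotz_on_slit_real[OF H])
    then show ?case by (simp add: g_def complex_eq_iff)
  qed
  have "mono_on {c<..<b} g"
    unfolding g_def by (rule herglotz_on_slit_mono_Re[OF H])
  then consider L where "((\<lambda>e. g (b - e)) \<longlongrightarrow> L) (at_right 0)"
    | "filterlim (\<lambda>e. g (b - e)) at_top (at_right 0)"
    using mono_on_tendsto_left_or_at_top[OF \<open>c < b\<close>] by blast
  then show ?thesis
  proof cases
    case (1 L)
    then have "((\<lambda>e. complex_of_real (g (b - e))) \<longlongrightarrow> of_real L) (at_right 0)"
      by (rule tendsto_of_real)
    then show ?thesis using tendsto_cong[OF F_eq] by blast
  next
    case 2
    then have "filterlim (\<lambda>e. complex_of_real (g (b - e))) at_infinity (at_right 0)"
      by (rule filterlim_compose[OF filterlim_of_real_at_infinity])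
    then show ?thesis using filterlim_cong[OF refl refl F_eq] by blast
  qed
qed

theorem lemma3p5:
  fixes f :: "complex \<Rightarrow> complex" and a b :: real and P :: "complex set"
  assumes "a < b"
    and "herglotz f"
    and "finite P"
    and "P \<subseteq> complex_of_real ` {a<..<b}"
    and "f holomorphic_on (({z. Im z \<noteq> 0} \<union> complex_of_real ` {a<..<b}) - P)"
    and "\<forall>p\<in>P. is_pole f p"
    and "\<forall>z \<in> ({z. Im z \<noteq> 0} \<union> complex_of_real ` {a<..<b}) - P. cnj (f z) = f (cnj z)"
  shows "(\<exists>L::real. ((\<lambda>e::real. f (complex_of_real (b - e))) \<longlongrightarrow> complex_of_real L) (at_right 0)
              \<and> ((\<lambda>e::real. f (complex_of_real b + \<i> * complex_of_real e)) \<longlongrightarrow> complex_of_real L) (at_right 0))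
       \<or> (filterlim (\<lambda>e::real. f (complex_of_real (b - e))) at_infinity (at_right 0)
              \<and> filterlim (\<lambda>e::real. f (complex_of_real b + \<i> * complex_of_real e)) at_infinity (at_right 0))"
proof -
  obtain c where "c < b" and sub: "slit_plane c b \<subseteq> slit_plane a b - P"
    using slit_plane_avoiding_finite[OF assms(1,3,4)] .
  have H: "herglotz_on_slit c b f"
  proof (rule herglotz_on_slit_of_reflection[OF assms(2)])
    show "f holomorphic_on slit_plane c b"
      using holomorphic_on_subset[OF assms(5)[folded slit_plane_def] sub] .
    show "\<And>z. z \<in> slit_plane c b \<Longrightarrow> cnj (f z) = f (cnj z)"
      using assms(7)[folded slit_plane_def] sub by blast
  qed
  show ?thesis
    using herglotz_on_slit_tendsto_left_or_infinity[OF H \<open>c < b\<close>]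
      herglotz_on_slit_tendsto_vertical[OF H \<open>c < b\<close>]
      herglotz_on_slit_tendsto_vertical_infinity[OF H \<open>c < b\<close>]
    by blast
qed

end
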